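(* Let $f:\{0,1\}^n\to\mathbb{R}$ be any function whose set of global maxima (optima) has size polynomial in $n$. Then the (1+1)~IA$^{\text{hyp}}$ using static hypermutation without FCM needs expected time exponential in $n$ (i.e. $e^{\Omega(n)}$) to find any of the optima.
   Context: The (1+1)~IA$^{\text{hyp}}$ maximises $f:\{0,1\}^n\to\mathbb{R}$: it initialises a single bit string $x$ uniformly at random; in each iteration it creates $y$ from $x$ by static hypermutation and replaces $x$ by $y$ if $f(y)\ge f(x)$. Static hypermutation has a constant parameter $0<c\le 1$ and mutation potential $M=cn$ (an integer). Without FCM (stop at first constructive mutation), static hypermutation creates $y$ by flipping exactly $M$ distinct bit positions of $x$ chosen uniformly at random. Time is measured in the number of iterations/fitness evaluations until an optimum is sampled. *)

theory Defs
  imports "HOL-Probability.Probability"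
begin

definition bitstrings :: "nat \<Rightarrow> bool list set" where
  "bitstrings n = {x. length x = n}"

definition optima :: "nat \<Rightarrow> (bool list \<Rightarrow> real) \<Rightarrow> bool list set" where
  "optima n f = {x \<in> bitstrings n. \<forall>y \<in> bitstrings n. f y \<le> f x}"

definition flip_bits :: "bool list \<Rightarrow> nat set \<Rightarrow> bool list" where
  "flip_bits x S = map (\<lambda>i. if i \<in> S then \<not> x ! i else x ! i) [0..<length x]"

definition static_hypermutation :: "nat \<Rightarrow> bool list \<Rightarrow> bool list pmf" where
  "static_hypermutation M x =
     map_pmf (flip_bits x) (pmf_of_set {S. S \<subseteq> {..<length x} \<and> card S = M})"

text \<open>State of the (1+1) IA: current search point and a flag recording whether an
  optimum has been sampled so far.\<close>
definition ia_init :: "nat \<Rightarrow> (bool list \<Rightarrow> real) \<Rightarrow> (bool list \<times> bool) pmf" where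
  "ia_init n f = map_pmf (\<lambda>x. (x, x \<in> optima n f)) (pmf_of_set (bitstrings n))"

definition ia_step :: "nat \<Rightarrow> nat \<Rightarrow> (bool list \<Rightarrow> real) \<Rightarrow> bool list \<times> bool
    \<Rightarrow> (bool list \<times> bool) pmf" where
  "ia_step n M f s =
     bind_pmf (static_hypermutation M (fst s))
       (\<lambda>y. return_pmf (if f y \<ge> f (fst s) then y else fst s, snd s \<or> y \<in> optima n f))"

definition ia_state :: "nat \<Rightarrow> nat \<Rightarrow> (bool list \<Rightarrow> real) \<Rightarrow> nat \<Rightarrow> (bool list \<times> bool) pmf" where
  "ia_state n M f t = ((\<lambda>p. bind_pmf p (ia_step n M f)) ^^ t) (ia_init n f)"

text \<open>Expected number of fitness evaluations T until an optimum is sampled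
  (the initial point is evaluation 1): E[T] = sum over t of Pr[T > t]
  = 1 + sum over t of Pr[no optimum sampled within t iterations].\<close>
definition ia_expected_time :: "nat \<Rightarrow> nat \<Rightarrow> (bool list \<Rightarrow> real) \<Rightarrow> ennreal" where
  "ia_expected_time n M f =
     1 + (\<Sum>t. ennreal (measure_pmf.prob (ia_state n M f t) {s. \<not> snd s}))"

end

theory Submission
  imports Defs "HOL-Real_Asymp.Real_Asymp"
begin

text \<open>Static hypermutation hits any fixed target y with probability at most
  1 / (n choose M), because distinct flip sets give distinct offspring. If M < n this
  is exponentially small, so by a union bound over all samples an optimum is found
  within fewer than (n choose M) / poly(n) iterations only with probability below 1/2.
  If M = n, the offspring is always the complement of x, so the search point
  alternates between x and its complement; with probability 1 - O(poly(n) / 2^n)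
  neither of them is optimal, and then the algorithm never finds an optimum.\<close>

lemma binomial_ge_exp:
  assumes "0 < c" "c \<le> 1" and M: "real M = c * real n"
  shows "exp (c * ln (1 / c) * real n) \<le> n choose M"
proof (cases "n = 0")
  case False
  have "M \<le> n"
    using assms mult_right_mono[OF \<open>c \<le> 1\<close>, of "real n"] by simp
  have "exp (c * ln (1 / c) * real n) = exp (ln (1 / c)) ^ M"
    using exp_of_nat_mult[of M "ln (1 / c)"] by (simp add: M algebra_simps)
  also have "\<dots> = (real n / real M) ^ M"
    using assms False by simp
  also have "\<dots> \<le> n choose M"
    by (rule binomial_ge_n_over_k_pow_k[OF \<open>M \<le> n\<close>])
  finally show ?thesis .
qed (use M in simp)

lemma suminf_ennreal_eq_top_if_bounded_below:
  fixes p :: "nat \<Rightarrow> real"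
  assumes "0 < a" and "\<And>t. a \<le> p t"
  shows "(\<Sum>t. ennreal (p t)) = \<top>"
proof -
  have "\<not> summable p"
  proof
    assume "summable p"
    then have "p \<longlonglongrightarrow> 0"
      by (rule summable_LIMSEQ_zero)
    then have "a \<le> 0"
      by (rule LIMSEQ_le_const) (use assms(2) in auto)
    with assms(1) show False by simp
  qed
  moreover have "0 \<le> p t" for t
    using assms(1) assms(2)[of t] by linarith
  ultimately show ?thesis
    using summable_suminf_not_top[of p] by blast
qed

lemma prob_bind_pmf_le_add:
  assumes "\<And>s. s \<in> set_pmf p \<Longrightarrow> s \<notin> A \<Longrightarrow> measure_pmf.prob (K s) A \<le> r" and "0 \<le> r"
  shows "measure_pmf.prob (bind_pmf p K) A \<le> measure_pmf.prob p A + r"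
proof -
  have "emeasure (K s) A \<le> indicator A s + ennreal r" if "s \<in> set_pmf p" for s
  proof (cases "s \<in> A")
    case True
    have "emeasure (K s) A \<le> 1" by (rule measure_pmf.emeasure_le_1)
    with True show ?thesis by (simp add: add_increasing2)
  next
    case False
    with assms that show ?thesis by (simp add: measure_pmf.emeasure_eq_measure ennreal_leI)
  qed
  then have "emeasure (bind_pmf p K) A \<le> (\<integral>\<^sup>+s. (indicator A s + ennreal r) \<partial>p)"
    by (auto intro!: nn_integral_mono_AE simp: AE_measure_pmf_iff)
  also have "\<dots> = ennreal (measure_pmf.prob p A + r)"
    using assms(2)
    by (simp add: nn_integral_add measure_pmf.emeasure_space_1 measure_pmf.emeasure_eq_measure ennreal_plus)
  finally have "ennreal (measure_pmf.prob (bind_pmf p K) A) \<le> ennreal (measure_pmf.prob p A + r)"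
    by (simp only: measure_pmf.emeasure_eq_measure)
  then show ?thesis
    using assms(2) by (subst (asm) ennreal_le_iff) auto
qed

lemma prob_bind_pmf_ge_closed:
  assumes "\<And>s. s \<in> A \<Longrightarrow> set_pmf (K s) \<subseteq> A"
  shows "measure_pmf.prob p A \<le> measure_pmf.prob (bind_pmf p K) A"
proof -
  have "indicator A s \<le> emeasure (K s) A" for s
    using assms[of s] measure_pmf.prob_eq_1[of A "K s"]
    by (auto simp: indicator_def measure_pmf.emeasure_eq_measure AE_measure_pmf_iff)
  then have "(\<integral>\<^sup>+s. indicator A s \<partial>p) \<le> (\<integral>\<^sup>+s. emeasure (K s) A \<partial>p)"
    by (rule nn_integral_mono)
  then have "emeasure p A \<le> emeasure (bind_pmf p K) A"
    by simp
  then show ?thesis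
    by (simp add: measure_pmf.emeasure_eq_measure)
qed

lemma length_flip_bits [simp]: "length (flip_bits x S) = length x"
  by (simp add: flip_bits_def)

lemma nth_flip_bits: "i < length x \<Longrightarrow> flip_bits x S ! i = (if i \<in> S then \<not> x ! i else x ! i)"
  by (simp add: flip_bits_def)

lemma inj_on_flip_bits: "inj_on (flip_bits x) (Pow {..<length x})"
proof (rule inj_onI)
  fix S T assume S: "S \<in> Pow {..<length x}" and T: "T \<in> Pow {..<length x}"
    and eq: "flip_bits x S = flip_bits x T"
  have "i \<in> S \<longleftrightarrow> i \<in> T" for i
  proof (cases "i < length x")
    case True
    then show ?thesis
      using arg_cong[OF eq, of "\<lambda>y. y ! i"] by (auto simp: nth_flip_bits split: if_splits)
  qed (use S T in auto)
  then show "S = T" by blast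
qed

lemma flip_bits_all: "flip_bits x {..<length x} = map Not x"
  by (intro nth_equalityI) (auto simp: nth_flip_bits)

lemma finite_subsets_card: "finite {S. S \<subseteq> {..<n::nat} \<and> card S = M}"
  by (rule finite_subset[of _ "Pow {..<n}"]) auto

lemma subsets_card_nonempty: "M \<le> n \<Longrightarrow> {S. S \<subseteq> {..<n::nat} \<and> card S = M} \<noteq> {}"
  by (auto intro!: exI[of _ "{..<M}"])

lemma set_static_hypermutation:
  assumes "M \<le> length x" "y \<in> set_pmf (static_hypermutation M x)"
  shows "length y = length x"
  using assms finite_subsets_card subsets_card_nonempty
  by (auto simp: static_hypermutation_def)

lemma prob_static_hypermutation_le:
  assumes "M \<le> length x" "finite A"
  shows "measure_pmf.prob (static_hypermutation M x) A \<le> card A / (length x choose M)"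
proof -
  let ?S = "{S. S \<subseteq> {..<length x} \<and> card S = M}"
  have "measure_pmf.prob (static_hypermutation M x) A = card (?S \<inter> flip_bits x -` A) / card ?S"
    using finite_subsets_card subsets_card_nonempty[OF assms(1)]
    by (simp add: static_hypermutation_def measure_pmf_of_set)
  also have "card ?S = length x choose M"
    using n_subsets[of "{..<length x}" M] by simp
  also have "card (?S \<inter> flip_bits x -` A) \<le> card A"
    by (rule card_inj_on_le[OF inj_on_subset[OF inj_on_flip_bits] _ assms(2)]) auto
  finally show ?thesis
    by (simp add: divide_right_mono)
qed

lemma static_hypermutation_all_bits:
  "static_hypermutation (length x) x = return_pmf (map Not x)"
proof -
  have "{S. S \<subseteq> {..<length x} \<and> card S = length x} = {{..<length x}}"
    using card_subset_eq[of "{..<length x}"] by auto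
  then show ?thesis
    by (simp add: static_hypermutation_def pmf_of_set_singleton flip_bits_all)
qed

lemma finite_bitstrings: "finite (bitstrings n)"
  using finite_lists_length_eq[of "UNIV :: bool set" n] by (simp add: bitstrings_def)

lemma card_bitstrings: "card (bitstrings n) = 2 ^ n"
  using card_lists_length_eq[of "UNIV :: bool set" n] by (simp add: bitstrings_def)

lemma bitstrings_nonempty: "bitstrings n \<noteq> {}"
  by (auto simp: bitstrings_def intro!: exI[of _ "replicate n True"])

lemma optima_subset_bitstrings: "optima n f \<subseteq> bitstrings n"
  by (auto simp: optima_def)

lemma finite_optima: "finite (optima n f)"
  using optima_subset_bitstrings finite_bitstrings by (rule finite_subset)

lemma prob_uniform_bitstrings:
  "measure_pmf.prob (pmf_of_set (bitstrings n)) S = card (bitstrings n \<inter> S) / 2 ^ n"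
  using finite_bitstrings bitstrings_nonempty card_bitstrings by (simp add: measure_pmf_of_set)

lemma ia_step_eq_map_pmf:
  "ia_step n M f s =
     map_pmf (\<lambda>y. (if f y \<ge> f (fst s) then y else fst s, snd s \<or> y \<in> optima n f))
       (static_hypermutation M (fst s))"
  by (simp add: ia_step_def map_pmf_def)

lemma ia_state_0: "ia_state n M f 0 = ia_init n f"
  by (simp add: ia_state_def)

lemma ia_state_Suc: "ia_state n M f (Suc t) = bind_pmf (ia_state n M f t) (ia_step n M f)"
  by (simp add: ia_state_def)

lemma length_ia_state:
  assumes "M \<le> n" "s \<in> set_pmf (ia_state n M f t)"
  shows "length (fst s) = n"
  using assms(2)
proof (induction t arbitrary: s)
  case 0
  then show ?case
    using finite_bitstrings bitstrings_nonempty
    by (auto simp: ia_state_0 ia_init_def bitstrings_def)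
next
  case (Suc t)
  then obtain s' y where "s' \<in> set_pmf (ia_state n M f t)"
    and "y \<in> set_pmf (static_hypermutation M (fst s'))"
    and "s = (if f y \<ge> f (fst s') then y else fst s', snd s' \<or> y \<in> optima n f)"
    by (auto simp: ia_state_Suc ia_step_eq_map_pmf)
  with Suc.IH assms(1) set_static_hypermutation[of M "fst s'" y] show ?case
    by auto
qed

lemma prob_ia_init_found_le:
  "measure_pmf.prob (ia_init n f) {s. snd s} \<le> card (optima n f) / 2 ^ n"
proof -
  have "measure_pmf.prob (ia_init n f) {s. snd s} = card (bitstrings n \<inter> optima n f) / 2 ^ n"
    by (simp add: ia_init_def prob_uniform_bitstrings vimage_def)
  also have "bitstrings n \<inter> optima n f = optima n f"
    using optima_subset_bitstrings by blast
  finally show ?thesis by simp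
qed

lemma prob_ia_state_found_le:
  assumes "M \<le> n"
  shows "measure_pmf.prob (ia_state n M f t) {s. snd s}
           \<le> (real t + 1) * (card (optima n f) / (n choose M))"
proof (induction t)
  case 0
  have "real (n choose M) \<le> 2 ^ n"
    using binomial_le_pow2[of n M] by (metis of_nat_le_iff of_nat_numeral of_nat_power)
  then have "card (optima n f) / 2 ^ n \<le> card (optima n f) / (n choose M)"
    using assms by (intro divide_left_mono) auto
  then show ?case
    using prob_ia_init_found_le[of n f] by (simp add: ia_state_0)
next
  case (Suc t)
  have "measure_pmf.prob (static_hypermutation M (fst s)) {y. snd s \<or> y \<in> optima n f}
          \<le> card (optima n f) / (n choose M)"
    if "s \<in> set_pmf (ia_state n M f t)" "\<not> snd s" for s
    using that prob_static_hypermutation_le[of M "fst s" "optima n f"]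
      length_ia_state[OF assms] assms finite_optima
    by simp
  then have "measure_pmf.prob (ia_state n M f (Suc t)) {s. snd s}
      \<le> measure_pmf.prob (ia_state n M f t) {s. snd s} + card (optima n f) / (n choose M)"
    unfolding ia_state_Suc
    by (intro prob_bind_pmf_le_add) (auto simp: ia_step_eq_map_pmf vimage_def)
  moreover have "(real (Suc t) + 1) * (card (optima n f) / (n choose M))
      = (real t + 1) * (card (optima n f) / (n choose M)) + card (optima n f) / (n choose M)"
    by (simp add: algebra_simps add_divide_distrib[symmetric])
  ultimately show ?case
    using Suc.IH by linarith
qed

text \<open>With M = n the search point only alternates between x and its complement, so
  these states never lead to an optimum.\<close>

definition complement_trapped :: "nat \<Rightarrow> (bool list \<Rightarrow> real) \<Rightarrow> (bool list \<times> bool) set" where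
  "complement_trapped n f =
     {s. length (fst s) = n \<and> \<not> snd s \<and> fst s \<notin> optima n f \<and> map Not (fst s) \<notin> optima n f}"

lemma set_ia_step_complement_trapped:
  assumes "s \<in> complement_trapped n f"
  shows "set_pmf (ia_step n n f s) \<subseteq> complement_trapped n f"
proof -
  have "length (fst s) = n"
    using assms by (simp add: complement_trapped_def)
  then show ?thesis
    using assms static_hypermutation_all_bits[of "fst s"]
    by (auto simp: ia_step_eq_map_pmf complement_trapped_def comp_def)
qed

lemma prob_ia_init_complement_trapped:
  "1 - 2 * card (optima n f) / 2 ^ n \<le> measure_pmf.prob (ia_init n f) (complement_trapped n f)"
proof -
  let ?O = "optima n f" and ?X = "{x. length x = n \<and> x \<notin> optima n f \<and> map Not x \<notin> optima n f}"
  have "bitstrings n \<inter> - ?X \<subseteq> ?O \<union> map Not ` ?O"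
  proof
    fix x assume "x \<in> bitstrings n \<inter> - ?X"
    moreover have "x = map Not (map Not x)" by (simp add: comp_def)
    ultimately show "x \<in> ?O \<union> map Not ` ?O"
      using image_eqI[of x "map Not" "map Not x" ?O] by (auto simp: bitstrings_def)
  qed
  then have "card (bitstrings n \<inter> - ?X) \<le> card (?O \<union> map Not ` ?O)"
    by (intro card_mono) (auto simp: finite_optima)
  also have "\<dots> \<le> card ?O + card (map Not ` ?O)"
    by (rule card_Un_le)
  also have "card (map Not ` ?O) \<le> card ?O"
    by (rule card_image_le[OF finite_optima])
  finally have "measure_pmf.prob (pmf_of_set (bitstrings n)) (- ?X) \<le> 2 * card ?O / 2 ^ n"
    by (simp add: prob_uniform_bitstrings divide_right_mono)
  moreover have "measure_pmf.prob (ia_init n f) (complement_trapped n f)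
      = 1 - measure_pmf.prob (pmf_of_set (bitstrings n)) (- ?X)"
    using measure_pmf.prob_compl[of ?X "pmf_of_set (bitstrings n)"]
    by (simp add: ia_init_def complement_trapped_def vimage_def Compl_eq_Diff_UNIV)
  ultimately show ?thesis by linarith
qed

lemma prob_ia_state_not_found_ge:
  "1 - 2 * card (optima n f) / 2 ^ n \<le> measure_pmf.prob (ia_state n n f t) {s. \<not> snd s}"
proof -
  have "measure_pmf.prob (ia_init n f) (complement_trapped n f)
          \<le> measure_pmf.prob (ia_state n n f t) (complement_trapped n f)"
  proof (induction t)
    case (Suc t)
    then show ?case
      unfolding ia_state_Suc
      using prob_bind_pmf_ge_closed[OF set_ia_step_complement_trapped] by (rule order_trans)
  qed (simp add: ia_state_0)
  also have "\<dots> \<le> measure_pmf.prob (ia_state n n f t) {s. \<not> snd s}"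
    by (rule measure_pmf.finite_measure_mono) (auto simp: complement_trapped_def)
  finally show ?thesis
    using prob_ia_init_complement_trapped[of n f] by linarith
qed

lemma ia_expected_time_ge:
  assumes "\<And>t. t < T \<Longrightarrow> a \<le> measure_pmf.prob (ia_state n M f t) {s. \<not> snd s}"
  shows "ennreal (real T * a) \<le> ia_expected_time n M f"
proof -
  let ?p = "\<lambda>t. measure_pmf.prob (ia_state n M f t) {s. \<not> snd s}"
  have "real T * a \<le> (\<Sum>t<T. ?p t)"
    using sum_mono[of "{..<T}" "\<lambda>_. a" ?p] assms by simp
  then have "ennreal (real T * a) \<le> (\<Sum>t<T. ennreal (?p t))"
    by (simp add: ennreal_leI sum_ennreal)
  also have "\<dots> \<le> (\<Sum>t. ennreal (?p t))"
    by (rule sum_le_suminf) auto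
  also have "\<dots> \<le> ia_expected_time n M f"
    by (simp add: ia_expected_time_def)
  finally show ?thesis .
qed

lemma ia_expected_time_all_bits_eq_top:
  assumes "4 * real (card (optima n f)) \<le> 2 ^ n"
  shows "ia_expected_time n n f = \<top>"
proof -
  have "2 * card (optima n f) / 2 ^ n \<le> (1 / 2 :: real)"
    using assms by (simp add: field_simps)
  then have "1 / 2 \<le> measure_pmf.prob (ia_state n n f t) {s. \<not> snd s}" for t
    using prob_ia_state_not_found_ge[of n f t] by linarith
  then have "(\<Sum>t. ennreal (measure_pmf.prob (ia_state n n f t) {s. \<not> snd s})) = \<top>"
    by (intro suminf_ennreal_eq_top_if_bounded_below[of "1 / 2"]) auto
  then show ?thesis
    by (simp add: ia_expected_time_def)
qed

lemma ia_expected_time_ge_half_horizon: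
  assumes "M \<le> n" and "2 * real T * card (optima n f) \<le> n choose M"
  shows "ennreal (real T / 2) \<le> ia_expected_time n M f"
proof -
  have pos: "0 < real (n choose M)"
    using assms(1) by simp
  have "1 / 2 \<le> measure_pmf.prob (ia_state n M f t) {s. \<not> snd s}" if "t < T" for t
  proof -
    have "measure_pmf.prob (ia_state n M f t) {s. snd s} \<le> (real t + 1) * (card (optima n f) / (n choose M))"
      by (rule prob_ia_state_found_le[OF assms(1)])
    also have "\<dots> \<le> real T * (card (optima n f) / (n choose M))"
      using that by (intro mult_right_mono) auto
    also have "\<dots> \<le> 1 / 2"
      using assms(2) pos by (simp add: field_simps)
    finally show ?thesis
      using measure_pmf.prob_compl[of "{s. snd s}" "ia_state n M f t"]
      by (simp add: Compl_eq_Diff_UNIV[symmetric] Collect_neg_eq[symmetric])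
  qed
  then show ?thesis
    using ia_expected_time_ge[of T "1 / 2"] by simp
qed

lemma eventually_ia_expected_time_all_bits_eq_top:
  "\<forall>\<^sub>F n in sequentially. \<forall>f. real (card (optima n f)) \<le> C * real n ^ k \<longrightarrow>
     ia_expected_time n n f = \<top>"
proof -
  have "\<forall>\<^sub>F n in sequentially. 4 * C * real n ^ k \<le> 2 ^ n"
    by real_asymp
  then show ?thesis
    by (rule eventually_mono) (auto intro!: ia_expected_time_all_bits_eq_top)
qed

lemma eventually_ia_expected_time_ge_exp:
  assumes "0 < c" "c < 1"
  shows "\<forall>\<^sub>F n in sequentially. \<forall>(M::nat) f. real M = c * real n \<longrightarrow>
     real (card (optima n f)) \<le> C * real n ^ k \<longrightarrow>
     ennreal (exp (c * ln (1 / c) / 2 * real n)) \<le> ia_expected_time n M f"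
proof -
  define \<delta> where "\<delta> = c * ln (1 / c) / 2"
  have "0 < \<delta>"
    using assms by (simp add: \<delta>_def)
  then have "\<forall>\<^sub>F n in sequentially. 6 * C * real n ^ k \<le> exp (\<delta> * real n)"
    by real_asymp
  then show ?thesis
    unfolding \<delta>_def[symmetric]
  proof (rule eventually_mono, intro allI impI)
    fix n M f
    assume poly: "6 * C * real n ^ k \<le> exp (\<delta> * real n)" and M: "real M = c * real n"
      and opt: "real (card (optima n f)) \<le> C * real n ^ k"
    define T where "T = nat \<lceil>2 * exp (\<delta> * real n)\<rceil>"
    have "M \<le> n"
      using M assms mult_right_mono[of c 1 "real n"] by simp
    have "1 \<le> exp (\<delta> * real n)"
      using \<open>0 < \<delta>\<close> by simp
    then have T: "real T \<le> 3 * exp (\<delta> * real n)"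
      unfolding T_def by linarith
    have "2 * real T * card (optima n f) \<le> 6 * exp (\<delta> * real n) * (C * real n ^ k)"
      by (rule mult_mono) (use T opt in auto)
    also have "\<dots> \<le> exp (\<delta> * real n) * exp (\<delta> * real n)"
      using poly by (simp add: mult.left_commute)
    also have "\<dots> = exp (c * ln (1 / c) * real n)"
      by (simp add: \<delta>_def flip: exp_add)
    also have "\<dots> \<le> n choose M"
      using assms M by (intro binomial_ge_exp) auto
    finally have "ennreal (real T / 2) \<le> ia_expected_time n M f"
      by (rule ia_expected_time_ge_half_horizon[OF \<open>M \<le> n\<close>])
    moreover have "exp (\<delta> * real n) \<le> real T / 2"
      unfolding T_def by linarith
    ultimately show "ennreal (exp (\<delta> * real n)) \<le> ia_expected_time n M f"
      using ennreal_leI order_trans by blast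
  qed
qed

theorem theorem1:
  fixes c :: real and C :: real and k :: nat
  assumes "0 < c" and "c \<le> 1"
  shows "\<exists>\<delta>>0. \<exists>N. \<forall>n\<ge>N. \<forall>(M::nat) (f :: bool list \<Rightarrow> real).
           real M = c * real n \<longrightarrow> real (card (optima n f)) \<le> C * real n ^ k \<longrightarrow>
           ia_expected_time n M f \<ge> ennreal (exp (\<delta> * real n))"
proof (cases "c = 1")
  case True
  obtain N where "\<forall>n\<ge>N. \<forall>f. real (card (optima n f)) \<le> C * real n ^ k \<longrightarrow>
      ia_expected_time n n f = \<top>"
    using eventually_ia_expected_time_all_bits_eq_top[of C k] by (auto simp: eventually_sequentially)
  then show ?thesis
    using True by (intro exI[of _ 1] conjI exI[of _ N]) auto
next
  case False
  with assms have "0 < c * ln (1 / c) / 2"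
    by simp
  moreover obtain N where "\<forall>n\<ge>N. \<forall>(M::nat) f. real M = c * real n \<longrightarrow>
      real (card (optima n f)) \<le> C * real n ^ k \<longrightarrow>
      ennreal (exp (c * ln (1 / c) / 2 * real n)) \<le> ia_expected_time n M f"
    using eventually_ia_expected_time_ge_exp[of c C k] assms False
    by (auto simp: eventually_sequentially)
  ultimately show ?thesis
    by blast
qed

end
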